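(* Let a trained classification model have feature space $\Phi\subseteq\mathbb{R}^f$ and produce logits $z=Wx_\phi+b$ for a feature vector $x_\phi\in\Phi$, where $W\in\mathbb{R}^{n\times f}$, $b\in\mathbb{R}^n$, $n$ the number of classes. Let $x$ be an input whose feature vector $x_\phi$ has distance at least $\delta$ from the closest decision boundary in $\Phi$. Then $$\max\mathrm{softmax}(Wx_\phi+b)\;\ge\;\frac{e^{\delta\rho(W)}}{e^{\delta\rho(W)}+(n-1)},\qquad \rho(W)=\min_{i\ne j,\ i,j\in\{1,\dots,n\}}\|W[j]-W[i]\|_2.$$
   Context: $W[k]$ denotes the $k$-th row of $W$. The classification of an input is the index of its largest logit. The decision boundary between classes $i$ and $j$ is the set of $y\in\Phi$ with $W[i]y+b[i]=W[j]y+b[j]\ge W[k]y+b[k]$ for all $k\notin\{i,j\}$; the distance to the closest decision boundary is the Euclidean distance from $x_\phi$ to the union of the decision boundaries between the class of $x$ and the other classes. $\mathrm{softmax}(z)[k]=e^{z[k]}/\sum_{l}e^{z[l]}$.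
   Formalization: The feature space $\Phi$ is all of $\mathbb{R}^f$, so the distance hypothesis concerns the decision boundaries in all of $\mathbb{R}^f$ rather than only their points in a subset $\Phi$. The statement above fails without it. *)

theory Defs
  imports "HOL-Analysis.Analysis"
begin

text \<open>Linear classification head: n classes (index type 'n), feature dimension f
  (index type 'f).  Row k of W is W $ k; the logits at feature vector y are W y + b.\<close>

definition logits :: "real^'f^'n \<Rightarrow> real^'n \<Rightarrow> real^'f \<Rightarrow> real^'n" where
  "logits W b y = W *v y + b"

text \<open>Decision boundary between classes i and j (feature space = all of R^f).\<close>
definition decision_boundary :: "real^'f^'n \<Rightarrow> real^'n \<Rightarrow> 'n \<Rightarrow> 'n \<Rightarrow> (real^'f) set" where
  "decision_boundary W b i j =
     {y. (W $ i) \<bullet> y + b $ i = (W $ j) \<bullet> y + b $ j \<and>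
         (\<forall>k. k \<noteq> i \<and> k \<noteq> j \<longrightarrow> (W $ k) \<bullet> y + b $ k \<le> (W $ i) \<bullet> y + b $ i)}"

definition softmax :: "real^'n \<Rightarrow> real^'n" where
  "softmax z = (\<chi> k. exp (z $ k) / (\<Sum>l\<in>UNIV. exp (z $ l)))"

definition rho :: "real^'f^'n \<Rightarrow> real" where
  "rho W = Min {norm (W $ j - W $ i) | i j. i \<noteq> j}"

end

theory Submission
  imports Defs
begin

text \<open>For j \<noteq> c, the quotient of the logit gap z[c] - z[j] by norm (W[j] - W[c]) is the distance
  from x to the hyperplane on which classes c and j tie. Walking from x straight towards the
  nearest of these hyperplanes, no other logit overtakes z[c] before the tie is reached, so the
  point reached lies on a decision boundary of c and hence at distance at least \<delta> from x.
  Consequently every gap is at least \<delta> \<rho>(W); each competing exponential in the softmax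
  denominator is then at most e^{z[c] - \<delta> \<rho>(W)}, which gives the bound.\<close>

lemma logits_component: "logits W b y $ k = W $ k \<bullet> y + b $ k"
  by (simp add: logits_def matrix_vector_mul_component)

lemma logits_add_scaleR:
  "logits W b (x + t *\<^sub>R v) $ k = logits W b x $ k + t * (W $ k \<bullet> v)"
  by (simp add: logits_component inner_add_right algebra_simps)

definition tie_distance :: "real^'f^'n \<Rightarrow> real^'n \<Rightarrow> real^'f \<Rightarrow> 'n \<Rightarrow> 'n \<Rightarrow> real" where
  "tie_distance W b x c k = (logits W b x $ c - logits W b x $ k) / norm (W $ k - W $ c)"

lemma logit_gap_eq_tie_distance:
  assumes "W $ k \<noteq> W $ c"
  shows "logits W b x $ c - logits W b x $ k = tie_distance W b x c k * norm (W $ k - W $ c)"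
  using assms by (simp add: tie_distance_def)

lemma tie_distance_nonneg:
  assumes "logits W b x $ k \<le> logits W b x $ c"
  shows "0 \<le> tie_distance W b x c k"
  using assms by (simp add: tie_distance_def)

lemma nearest_tie_point_in_decision_boundary:
  fixes W :: "real^'f^'n"
  assumes max: "\<forall>k. logits W b x $ k \<le> logits W b x $ c"
    and "W $ j \<noteq> W $ c"
    and nearest: "\<And>k. W $ k \<noteq> W $ c \<Longrightarrow> tie_distance W b x c j \<le> tie_distance W b x c k"
  shows "x + tie_distance W b x c j *\<^sub>R sgn (W $ j - W $ c) \<in> decision_boundary W b c j"
proof -
  define d where "d = tie_distance W b x c j"
  define u where "u = sgn (W $ j - W $ c)"
  define y where "y = x + d *\<^sub>R u"
  have d_nonneg: "0 \<le> d"
    using max by (simp add: d_def tie_distance_nonneg)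
  have shift: "logits W b y $ c - logits W b y $ k
      = (logits W b x $ c - logits W b x $ k) - d * ((W $ k - W $ c) \<bullet> u)" for k
    by (simp add: y_def logits_add_scaleR inner_diff_left algebra_simps)
  have tie: "logits W b y $ j = logits W b y $ c"
  proof -
    have "(W $ j - W $ c) \<bullet> u = norm (W $ j - W $ c)"
      using \<open>W $ j \<noteq> W $ c\<close>
      by (simp add: u_def sgn_div_norm divide_inverse power2_norm_eq_inner [symmetric]
          power2_eq_square)
    then show ?thesis
      using shift [of j] logit_gap_eq_tie_distance [OF \<open>W $ j \<noteq> W $ c\<close>, where b = b and x = x]
      by (simp add: d_def)
  qed
  have below: "logits W b y $ k \<le> logits W b y $ c" for k
  proof (cases "W $ k = W $ c")
    case True
    then show ?thesis using shift [of k] max [rule_format, of k] by simp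
  next
    case False
    have "(W $ k - W $ c) \<bullet> u \<le> norm (W $ k - W $ c)"
      using norm_cauchy_schwarz [of "W $ k - W $ c" u] \<open>W $ j \<noteq> W $ c\<close>
      by (simp add: u_def norm_sgn)
    then have "d * ((W $ k - W $ c) \<bullet> u) \<le> d * norm (W $ k - W $ c)"
      using d_nonneg by (rule mult_left_mono)
    also have "\<dots> \<le> tie_distance W b x c k * norm (W $ k - W $ c)"
      using nearest [OF False] by (simp add: d_def mult_right_mono)
    finally show ?thesis
      using shift [of k] logit_gap_eq_tie_distance [OF False, where b = b and x = x] by simp
  qed
  show ?thesis
    using tie below
    by (auto simp: decision_boundary_def logits_component simp flip: y_def d_def u_def)
qed

lemma logit_gap_ge_boundary_distance:
  fixes W :: "real^'f^'n"
  assumes max: "\<forall>k. logits W b x $ k \<le> logits W b x $ c"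
    and far: "\<forall>j. j \<noteq> c \<longrightarrow> (\<forall>y \<in> decision_boundary W b c j. \<delta> \<le> dist x y)"
  shows "\<delta> * norm (W $ j - W $ c) \<le> logits W b x $ c - logits W b x $ j"
proof (cases "W $ j = W $ c")
  case True
  then show ?thesis using max by simp
next
  case False
  define S where "S = {k. W $ k \<noteq> W $ c}"
  have "S \<noteq> {}" using False by (auto simp: S_def)
  then obtain j0 where "is_arg_min (tie_distance W b x c) (\<lambda>k. k \<in> S) j0"
    using ex_is_arg_min_if_finite [OF finite] by blast
  then have "j0 \<in> S"
    and nearest: "\<And>k. k \<in> S \<Longrightarrow> tie_distance W b x c j0 \<le> tie_distance W b x c k"
    by (simp_all add: is_arg_min_linorder)
  have "j0 \<noteq> c" using \<open>j0 \<in> S\<close> by (auto simp: S_def)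
  have "\<delta> \<le> dist x (x + tie_distance W b x c j0 *\<^sub>R sgn (W $ j0 - W $ c))"
    using far \<open>j0 \<noteq> c\<close> nearest_tie_point_in_decision_boundary [OF max, of j0] \<open>j0 \<in> S\<close> nearest
    by (auto simp: S_def)
  also have "\<dots> = tie_distance W b x c j0"
    using \<open>j0 \<in> S\<close> max by (simp add: S_def dist_norm norm_sgn tie_distance_nonneg)
  also have "\<dots> \<le> tie_distance W b x c j"
    using nearest False by (simp add: S_def)
  finally show ?thesis
    using logit_gap_eq_tie_distance [OF False] by (simp add: mult_right_mono)
qed

lemma softmax_ge_of_logit_margin:
  fixes z :: "real^'n"
  assumes margin: "\<And>j. j \<noteq> c \<Longrightarrow> a \<le> z $ c - z $ j"
  shows "exp a / (exp a + (real CARD('n) - 1)) \<le> softmax z $ c"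
proof -
  define s where "s = (\<Sum>l\<in>UNIV. exp (z $ l))"
  define m where "m = real CARD('n) - 1"
  have s_pos: "0 < s"
    by (simp add: s_def sum_pos)
  have denom_pos: "0 < exp a + m"
    by (simp add: m_def add_pos_nonneg)
  have "(\<Sum>l\<in>UNIV - {c}. exp (z $ l)) \<le> (\<Sum>l\<in>UNIV - {c}. exp (z $ c - a))"
    by (intro sum_mono) (use margin in fastforce)
  also have "\<dots> = m * exp (z $ c - a)"
    by (simp add: m_def card_Diff_singleton of_nat_diff)
  finally have "s \<le> exp (z $ c) + m * exp (z $ c - a)"
    by (simp add: s_def sum.remove [of UNIV c])
  also have "\<dots> = exp (z $ c) * (exp a + m) / exp a"
    by (simp add: exp_diff field_simps)
  finally have s_le: "s \<le> exp (z $ c) * (exp a + m) / exp a" .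
  have "exp a / (exp a + m) = exp (z $ c) / (exp (z $ c) * (exp a + m) / exp a)"
    by simp
  also have "\<dots> \<le> exp (z $ c) / s"
    using s_le s_pos denom_pos by (intro divide_left_mono) auto
  also have "\<dots> = softmax z $ c"
    by (simp add: softmax_def s_def)
  finally show ?thesis
    by (simp add: m_def)
qed

lemma finite_row_distances:
  fixes W :: "real^'f^'n"
  shows "finite {norm (W $ j - W $ i) | i j. i \<noteq> j}"
  by (rule finite_subset [of _ "(\<lambda>(i, j). norm (W $ j - W $ i)) ` UNIV"]) auto

lemma rho_le_norm_diff:
  fixes W :: "real^'f^'n"
  assumes "i \<noteq> j"
  shows "rho W \<le> norm (W $ j - W $ i)"
  unfolding rho_def using assms finite_row_distances by (intro Min_le) auto

lemma rho_nonneg: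
  fixes W :: "real^'f^'n"
  assumes "CARD('n) \<ge> 2"
  shows "0 \<le> rho W"
proof -
  obtain P :: "'n set" where "card P = 2"
    using ex_card [OF assms] by blast
  then obtain i j :: 'n where "i \<noteq> j"
    by (auto simp: card_2_iff)
  then show ?thesis
    unfolding rho_def by (subst Min_ge_iff) (auto simp: finite_row_distances)
qed

theorem corollary1:
  fixes W :: "real^'f^'n" and b :: "real^'n" and x :: "real^'f" and c :: 'n and \<delta> :: real
  assumes "CARD('n) \<ge> 2"
    and "\<forall>k. logits W b x $ k \<le> logits W b x $ c"
    and "\<forall>j. j \<noteq> c \<longrightarrow> (\<forall>y \<in> decision_boundary W b c j. \<delta> \<le> dist x y)"
  shows "Max (range (\<lambda>k. softmax (logits W b x) $ k))
           \<ge> exp (\<delta> * rho W) / (exp (\<delta> * rho W) + (real CARD('n) - 1))"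
proof -
  have margin: "\<delta> * rho W \<le> logits W b x $ c - logits W b x $ j" if "j \<noteq> c" for j
  proof (cases "\<delta> \<le> 0")
    case True
    then show ?thesis
      using assms(2) rho_nonneg [OF assms(1), of W]
      by (metis diff_ge_0_iff_ge mult_nonpos_nonneg order_trans)
  next
    case False
    then have "\<delta> * rho W \<le> \<delta> * norm (W $ j - W $ c)"
      using rho_le_norm_diff [OF \<open>j \<noteq> c\<close> [symmetric]] by simp
    also have "\<dots> \<le> logits W b x $ c - logits W b x $ j"
      using logit_gap_ge_boundary_distance [OF assms(2,3)] .
    finally show ?thesis .
  qed
  have "exp (\<delta> * rho W) / (exp (\<delta> * rho W) + (real CARD('n) - 1)) \<le> softmax (logits W b x) $ c"
    using margin by (rule softmax_ge_of_logit_margin)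
  also have "\<dots> \<le> Max (range (\<lambda>k. softmax (logits W b x) $ k))"
    by (rule Max_ge) auto
  finally show ?thesis .
qed

end
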